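(* Let $V_1,V_2\subset\mathbb R^n\setminus\{0\}$ be finite disjoint sets such that no element of $V_1\cup V_2$ is a positive multiple of another, and suppose $\operatorname{pos}V_1\cap\operatorname{pos}V_2\neq\{0\}$. Then there exist $V_1'\subseteq V_1$ and $V_2'\subseteq V_2$ such that $(\operatorname{pos}V_1'\cap\operatorname{pos}V_2')\setminus\{0\}$ is exactly one open ray from the origin, this ray is contained in the relative interior of both $\operatorname{pos}V_1'$ and $\operatorname{pos}V_2'$, and $V_1'\cup V_2'$ is separated from $0$ (i.e. $0\notin\operatorname{conv}(V_1'\cup V_2')$).
   Context: $\operatorname{pos}A$ denotes the positive hull of $A$, the set of all nonnegative linear combinations of elements of $A$. *)

theory Defs
  imports "HOL-Analysis.Analysis"
begin

definition pos :: "'a::real_vector set \<Rightarrow> 'a set" where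
  "pos A = {(\<Sum>v\<in>A. c v *\<^sub>R v) | c. \<forall>v\<in>A. c v \<ge> 0}"

definition open_ray :: "'a::real_vector \<Rightarrow> 'a set" where
  "open_ray d = {t *\<^sub>R d | t. t > 0}"

end

theory Submission
  imports Defs
begin

text \<open>Choose S \<subseteq> V1 and T \<subseteq> V2 of minimal total size whose positive hulls still meet
  outside 0. Call coefficients c on S \<union> T a dependency if c combines S and T to the same
  point. A nonnegative dependency with nonzero point has all coefficients strictly positive,
  since a vanishing coefficient would let us drop that vector. Shifting one such dependency
  along any other one until a coefficient vanishes shows that all dependencies are
  proportional to a single strictly positive one. So the common points form one ray lying in
  both relative interiors, and a convex combination of S \<union> T equal to 0, which is a
  dependency with coefficients of opposite signs on S and on T, cannot exist.\<close>

lemma sum_scaleR_in_pos: "\<forall>v\<in>A. c v \<ge> 0 \<Longrightarrow> (\<Sum>v\<in>A. c v *\<^sub>R v) \<in> pos A"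
  unfolding pos_def by blast

lemma zero_in_pos: "0 \<in> pos A"
  using sum_scaleR_in_pos[of A "\<lambda>_. 0"] by simp

lemma sum_scaleR_in_pos_Diff:
  assumes "finite A" "u \<in> A" "\<forall>v\<in>A. c v \<ge> 0" "c u = 0"
  shows "(\<Sum>v\<in>A. c v *\<^sub>R v) \<in> pos (A - {u})"
proof -
  have "(\<Sum>v\<in>A. c v *\<^sub>R v) = c u *\<^sub>R u + (\<Sum>v\<in>A - {u}. c v *\<^sub>R v)"
    using sum.remove[OF assms(1,2)] by blast
  then show ?thesis using assms sum_scaleR_in_pos[of "A - {u}" c] by simp
qed

lemma convex_pos: "convex (pos A)"
  unfolding convex_def
proof (intro ballI allI impI)
  fix x y and u v :: real
  assume "x \<in> pos A" "y \<in> pos A" "0 \<le> u" "0 \<le> v" "u + v = 1"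
  then obtain c d where c: "x = (\<Sum>w\<in>A. c w *\<^sub>R w)" "\<forall>w\<in>A. c w \<ge> 0"
    and d: "y = (\<Sum>w\<in>A. d w *\<^sub>R w)" "\<forall>w\<in>A. d w \<ge> 0"
    unfolding pos_def by blast
  have "u *\<^sub>R x + v *\<^sub>R y = (\<Sum>w\<in>A. (u * c w + v * d w) *\<^sub>R w)"
    by (simp add: c d scaleR_sum_right sum.distrib scaleR_add_left)
  also have "\<dots> \<in> pos A"
    using c d \<open>0 \<le> u\<close> \<open>0 \<le> v\<close> by (intro sum_scaleR_in_pos) simp
  finally show "u *\<^sub>R x + v *\<^sub>R y \<in> pos A" .
qed

lemma sum_scaleR_in_rel_interior_pos:
  fixes A :: "'a::euclidean_space set"
  assumes fin: "finite A" and c_pos: "\<forall>v\<in>A. c v > 0"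
  shows "(\<Sum>v\<in>A. c v *\<^sub>R v) \<in> rel_interior (pos A)"
proof -
  have "pos A \<noteq> {}" using zero_in_pos by blast
  show ?thesis unfolding convex_rel_interior_iff[OF convex_pos \<open>pos A \<noteq> {}\<close>]
  proof
    fix y assume "y \<in> pos A"
    then obtain d where d: "y = (\<Sum>w\<in>A. d w *\<^sub>R w)" "\<forall>w\<in>A. d w \<ge> 0"
      unfolding pos_def by blast
    \<comment> \<open>Small enough that every coefficient c v - \<delta> (d v - c v) is nonnegative.\<close>
    define \<delta> where "\<delta> = Min (insert 1 ((\<lambda>v. c v / (d v + 1)) ` A))"
    have fin_ratios: "finite (insert 1 ((\<lambda>v. c v / (d v + 1)) ` A))" using fin by simp
    have \<delta>_pos: "\<delta> > 0"
      unfolding \<delta>_def using fin_ratios c_pos d(2) by (auto simp: Min_gr_iff)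
    have \<delta>_le: "\<delta> * d v \<le> c v" if "v \<in> A" for v
    proof -
      have "\<delta> \<le> c v / (d v + 1)" unfolding \<delta>_def using fin_ratios that by (intro Min_le) auto
      then have "\<delta> * (d v + 1) \<le> c v" using d(2) that by (auto simp: le_divide_eq add_nonneg_pos)
      then show ?thesis using \<delta>_pos by (simp add: algebra_simps)
    qed
    have "(1 - (1 + \<delta>)) *\<^sub>R y + (1 + \<delta>) *\<^sub>R (\<Sum>v\<in>A. c v *\<^sub>R v)
        = (\<Sum>v\<in>A. ((1 + \<delta>) * c v - \<delta> * d v) *\<^sub>R v)"
      unfolding d scaleR_sum_right sum.distrib[symmetric] scaleR_scaleR
      by (rule sum.cong) (simp_all add: algebra_simps)
    also have "\<dots> \<in> pos A"
    proof (intro sum_scaleR_in_pos ballI)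
      fix v assume "v \<in> A"
      then show "(1 + \<delta>) * c v - \<delta> * d v \<ge> 0"
        using \<delta>_le[of v] mult_pos_pos[OF \<delta>_pos, of "c v"] c_pos by (simp add: algebra_simps)
    qed
    finally show "\<exists>e>1. (1 - e) *\<^sub>R y + e *\<^sub>R (\<Sum>v\<in>A. c v *\<^sub>R v) \<in> pos A"
      using \<delta>_pos by (intro exI[of _ "1 + \<delta>"]) simp
  qed
qed

lemma scaleR_in_pos:
  assumes "0 \<le> t" "x \<in> pos A"
  shows "t *\<^sub>R x \<in> pos A"
proof -
  obtain c where c: "x = (\<Sum>v\<in>A. c v *\<^sub>R v)" "\<forall>v\<in>A. c v \<ge> 0"
    using assms(2) unfolding pos_def by blast
  have "t *\<^sub>R x = (\<Sum>v\<in>A. (t * c v) *\<^sub>R v)" by (simp add: c(1) scaleR_sum_right)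
  also have "\<dots> \<in> pos A" using assms(1) c(2) by (intro sum_scaleR_in_pos) simp
  finally show ?thesis .
qed

lemma min_ratio_shift:
  fixes a c :: "'b \<Rightarrow> real"
  assumes "finite A" and a_nonneg: "\<forall>j\<in>A. 0 \<le> a j" and "\<exists>j\<in>A. 0 < c j"
  obtains t i where "0 \<le> t" "i \<in> A" "a i - t * c i = 0" "\<forall>j\<in>A. 0 \<le> a j - t * c j"
proof -
  define J where "J = {j\<in>A. 0 < c j}"
  have "finite J" "J \<noteq> {}" using assms unfolding J_def by auto
  define t where "t = Min ((\<lambda>j. a j / c j) ` J)"
  have "t \<in> (\<lambda>j. a j / c j) ` J"
    unfolding t_def using \<open>finite J\<close> \<open>J \<noteq> {}\<close> by (intro Min_in) auto
  then obtain i where i: "i \<in> J" "t = a i / c i" by blast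
  have t_le: "t \<le> a j / c j" if "j \<in> J" for j
    unfolding t_def using \<open>finite J\<close> that by simp
  have "0 \<le> t" using i a_nonneg unfolding J_def by simp
  moreover have "0 \<le> a j - t * c j" if "j \<in> A" for j
  proof (cases "0 < c j")
    case True
    then show ?thesis using t_le[of j] that unfolding J_def by (simp add: le_divide_eq)
  next
    case False
    then have "t * c j \<le> 0" using \<open>0 \<le> t\<close> by (simp add: mult_nonneg_nonpos)
    then show ?thesis using a_nonneg that by fastforce
  qed
  moreover have "a i - t * c i = 0" using i unfolding J_def by simp
  ultimately show ?thesis using that i(1) unfolding J_def by blast
qed

locale minimal_overlap =
  fixes S T :: "'a::euclidean_space set"
  assumes finite_S: "finite S" and finite_T: "finite T" and disjoint: "S \<inter> T = {}"
    and overlap: "pos S \<inter> pos T \<noteq> {0}"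
    and minimal_S: "\<And>v. v \<in> S \<Longrightarrow> pos (S - {v}) \<inter> pos T = {0}"
    and minimal_T: "\<And>w. w \<in> T \<Longrightarrow> pos S \<inter> pos (T - {w}) = {0}"
begin

text \<open>Balanced functions are the dependencies; as S and T are disjoint, one function on
  S \<union> T records a representation in pos S together with one in pos T.\<close>
definition balanced :: "('a \<Rightarrow> real) \<Rightarrow> bool" where
  "balanced c \<longleftrightarrow> (\<Sum>v\<in>S. c v *\<^sub>R v) = (\<Sum>w\<in>T. c w *\<^sub>R w)"

lemma finite_S_T: "finite (S \<union> T)"
  using finite_S finite_T by simp

lemma balanced_diff_scaled:
  assumes "balanced a" "balanced c"
  shows "balanced (\<lambda>i. a i - t * c i)"
  using assms unfolding balanced_def
  by (simp add: scaleR_diff_left sum_subtractf flip: scaleR_scaleR scaleR_sum_right)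

lemma obtain_balanced:
  assumes "y \<in> pos S" "y \<in> pos T"
  obtains c where "balanced c" "\<forall>i\<in>S \<union> T. 0 \<le> c i" "(\<Sum>v\<in>S. c v *\<^sub>R v) = y"
proof -
  obtain a where a: "y = (\<Sum>v\<in>S. a v *\<^sub>R v)" "\<forall>v\<in>S. 0 \<le> a v"
    using assms(1) unfolding pos_def by blast
  obtain b where b: "y = (\<Sum>w\<in>T. b w *\<^sub>R w)" "\<forall>w\<in>T. 0 \<le> b w"
    using assms(2) unfolding pos_def by blast
  define c where "c i = (if i \<in> S then a i else b i)" for i
  have S_sum: "(\<Sum>v\<in>S. c v *\<^sub>R v) = y" unfolding a c_def by (rule sum.cong) auto
  moreover have "(\<Sum>w\<in>T. c w *\<^sub>R w) = y"
    unfolding b c_def using disjoint by (intro sum.cong) auto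
  ultimately have "balanced c" unfolding balanced_def by simp
  moreover have "\<forall>i\<in>S \<union> T. 0 \<le> c i" using a b unfolding c_def by auto
  ultimately show ?thesis using that S_sum by blast
qed

lemma balanced_zero_coeff:
  assumes "balanced c" "\<forall>j\<in>S \<union> T. 0 \<le> c j" "i \<in> S \<union> T" "c i = 0"
  shows "(\<Sum>v\<in>S. c v *\<^sub>R v) = 0"
proof -
  define y where "y = (\<Sum>v\<in>S. c v *\<^sub>R v)"
  have y_T: "y = (\<Sum>w\<in>T. c w *\<^sub>R w)" using assms(1) unfolding y_def balanced_def .
  have "y \<in> pos S" unfolding y_def using assms(2) by (auto intro: sum_scaleR_in_pos)
  have "y \<in> pos T" unfolding y_T using assms(2) by (auto intro: sum_scaleR_in_pos)
  consider "i \<in> S" | "i \<in> T" using assms(3) by blast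
  then have "y = 0"
  proof cases
    case 1
    have "y \<in> pos (S - {i})"
      unfolding y_def using assms(2,4) finite_S 1 by (intro sum_scaleR_in_pos_Diff) auto
    then show ?thesis using minimal_S[OF 1] \<open>y \<in> pos T\<close> by blast
  next
    case 2
    have "y \<in> pos (T - {i})"
      unfolding y_T using assms(2,4) finite_T 2 by (intro sum_scaleR_in_pos_Diff) auto
    then show ?thesis using minimal_T[OF 2] \<open>y \<in> pos S\<close> by blast
  qed
  then show ?thesis unfolding y_def .
qed

lemma balanced_nonneg_pos:
  assumes "balanced c" "\<forall>i\<in>S \<union> T. 0 \<le> c i" "(\<Sum>v\<in>S. c v *\<^sub>R v) \<noteq> 0"
  shows "\<forall>i\<in>S \<union> T. 0 < c i"
  using balanced_zero_coeff[OF assms(1,2)] assms(2,3) by force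

lemma obtain_pos_balanced:
  obtains a where "balanced a" "\<forall>i\<in>S \<union> T. 0 < a i" "(\<Sum>v\<in>S. a v *\<^sub>R v) \<noteq> 0"
proof -
  obtain x where x: "x \<in> pos S" "x \<in> pos T" "x \<noteq> 0" using overlap zero_in_pos by blast
  obtain a where "balanced a" "\<forall>i\<in>S \<union> T. 0 \<le> a i" "(\<Sum>v\<in>S. a v *\<^sub>R v) = x"
    using obtain_balanced[OF x(1,2)] by blast
  then show ?thesis using that balanced_nonneg_pos x(3) by blast
qed

lemma balanced_nonneg_zero:
  assumes "balanced c" "\<forall>i\<in>S \<union> T. 0 \<le> c i" "(\<Sum>v\<in>S. c v *\<^sub>R v) = 0"
  shows "\<forall>i\<in>S \<union> T. c i = 0"
proof (rule ccontr)
  assume "\<not> (\<forall>i\<in>S \<union> T. c i = 0)"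
  then have "\<exists>j\<in>S \<union> T. 0 < c j" using assms(2) by force
  obtain a where a: "balanced a" "\<forall>i\<in>S \<union> T. 0 < a i" "(\<Sum>v\<in>S. a v *\<^sub>R v) \<noteq> 0"
    by (rule obtain_pos_balanced)
  have a_nonneg: "\<forall>i\<in>S \<union> T. 0 \<le> a i" using a(2) by (simp add: less_imp_le)
  obtain t i where "i \<in> S \<union> T" "a i - t * c i = 0"
    and shifted_nonneg: "\<forall>j\<in>S \<union> T. 0 \<le> a j - t * c j"
    using min_ratio_shift[OF finite_S_T a_nonneg \<open>\<exists>j\<in>S \<union> T. 0 < c j\<close>] by blast
  \<comment> \<open>Shifting along c kills a coefficient but does not move the point.\<close>
  have "(\<Sum>v\<in>S. (a v - t * c v) *\<^sub>R v) = 0"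
    using balanced_zero_coeff[OF balanced_diff_scaled[OF a(1) assms(1)] shifted_nonneg]
      \<open>i \<in> S \<union> T\<close> \<open>a i - t * c i = 0\<close> .
  moreover have "(\<Sum>v\<in>S. (a v - t * c v) *\<^sub>R v) = (\<Sum>v\<in>S. a v *\<^sub>R v)"
    using assms(3) by (simp add: scaleR_diff_left sum_subtractf flip: scaleR_scaleR scaleR_sum_right)
  ultimately show False using a(3) by simp
qed

lemma balanced_proportional:
  assumes a: "balanced a" "\<forall>i\<in>S \<union> T. 0 \<le> a i" "(\<Sum>v\<in>S. a v *\<^sub>R v) \<noteq> 0"
    and "balanced c"
  shows "\<exists>k. \<forall>i\<in>S \<union> T. c i = k * a i"
proof -
  have proportional_if_pos: "\<exists>k. \<forall>i\<in>S \<union> T. g i = k * a i"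
    if g: "balanced g" "\<exists>j\<in>S \<union> T. 0 < g j" for g
  proof -
    obtain t i where "i \<in> S \<union> T" "a i - t * g i = 0"
      and shifted_nonneg: "\<forall>j\<in>S \<union> T. 0 \<le> a j - t * g j"
      using min_ratio_shift[OF finite_S_T a(2) g(2)] by blast
    have shifted_balanced: "balanced (\<lambda>j. a j - t * g j)"
      using a(1) g(1) by (rule balanced_diff_scaled)
    then have "(\<Sum>v\<in>S. (a v - t * g v) *\<^sub>R v) = 0"
      using shifted_nonneg \<open>i \<in> S \<union> T\<close> \<open>a i - t * g i = 0\<close> by (rule balanced_zero_coeff)
    then have a_eq: "\<forall>j\<in>S \<union> T. a j = t * g j"
      using balanced_nonneg_zero[OF shifted_balanced shifted_nonneg] by simp
    have "t \<noteq> 0"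
    proof
      assume "t = 0"
      then have "(\<Sum>v\<in>S. a v *\<^sub>R v) = 0" using a_eq by simp
      then show False using a(3) by contradiction
    qed
    then show ?thesis using a_eq by (intro exI[of _ "1 / t"]) simp
  qed
  consider "\<exists>j\<in>S \<union> T. 0 < c j" | "\<exists>j\<in>S \<union> T. 0 < - c j" | "\<forall>j\<in>S \<union> T. c j = 0"
    by force
  then show ?thesis
  proof cases
    case 1
    then show ?thesis using proportional_if_pos[OF \<open>balanced c\<close>] by blast
  next
    case 2
    have "balanced (\<lambda>j. - c j)"
      using \<open>balanced c\<close> unfolding balanced_def by (simp add: sum_negf)
    then obtain k where "\<forall>i\<in>S \<union> T. - c i = k * a i" using proportional_if_pos 2 by blast
    then show ?thesis by (intro exI[of _ "- k"]) force
  next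
    case 3
    then show ?thesis by (intro exI[of _ 0]) simp
  qed
qed

lemma common_point_in_rel_interior:
  assumes "y \<in> pos S" "y \<in> pos T" "y \<noteq> 0"
  shows "y \<in> rel_interior (pos S)" "y \<in> rel_interior (pos T)"
proof -
  obtain c where c: "balanced c" "\<forall>i\<in>S \<union> T. 0 \<le> c i" "(\<Sum>v\<in>S. c v *\<^sub>R v) = y"
    using obtain_balanced[OF assms(1,2)] by blast
  have c_pos: "\<forall>i\<in>S \<union> T. 0 < c i" using balanced_nonneg_pos c assms(3) by simp
  show "y \<in> rel_interior (pos S)"
    using sum_scaleR_in_rel_interior_pos[OF finite_S, of c] c(3) c_pos by simp
  show "y \<in> rel_interior (pos T)"
    using sum_scaleR_in_rel_interior_pos[OF finite_T, of c] c(1,3) c_pos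
    unfolding balanced_def by simp
qed

lemma pos_inter_eq_open_ray:
  assumes x: "x \<in> pos S" "x \<in> pos T" "x \<noteq> 0"
  shows "(pos S \<inter> pos T) - {0} = open_ray x"
proof
  show "open_ray x \<subseteq> (pos S \<inter> pos T) - {0}"
    unfolding open_ray_def using x by (auto intro: scaleR_in_pos)
next
  show "(pos S \<inter> pos T) - {0} \<subseteq> open_ray x"
  proof
    fix y assume y: "y \<in> (pos S \<inter> pos T) - {0}"
    obtain a where a: "balanced a" "\<forall>i\<in>S \<union> T. 0 \<le> a i" "(\<Sum>v\<in>S. a v *\<^sub>R v) = x"
      using obtain_balanced[OF x(1,2)] by blast
    obtain c where c: "balanced c" "\<forall>i\<in>S \<union> T. 0 \<le> c i" "(\<Sum>v\<in>S. c v *\<^sub>R v) = y"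
      using y obtain_balanced by blast
    obtain k where k: "\<forall>i\<in>S \<union> T. c i = k * a i"
      using balanced_proportional[OF a(1,2)] a(3) x(3) c(1) by blast
    obtain s where "s \<in> S" using a(3) x(3) by fastforce
    have "0 < c s" "0 < a s"
      using balanced_nonneg_pos a c x(3) y \<open>s \<in> S\<close> by auto
    then have "0 < k" using k \<open>s \<in> S\<close> by (simp add: zero_less_mult_iff)
    have "y = (\<Sum>v\<in>S. (k * a v) *\<^sub>R v)" unfolding c(3)[symmetric] using k by (intro sum.cong) auto
    also have "\<dots> = k *\<^sub>R x" by (simp add: a(3)[symmetric] scaleR_sum_right)
    finally show "y \<in> open_ray x" unfolding open_ray_def using \<open>0 < k\<close> by blast
  qed
qed

lemma zero_notin_convex_hull: "0 \<notin> convex hull (S \<union> T)"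
proof
  assume "0 \<in> convex hull (S \<union> T)"
  then obtain u where
    u: "\<forall>i\<in>S \<union> T. 0 \<le> u i" "sum u (S \<union> T) = 1" "(\<Sum>i\<in>S \<union> T. u i *\<^sub>R i) = 0"
    unfolding convex_hull_finite[OF finite_S_T] by blast
  define c where "c i = (if i \<in> S then u i else - u i)" for i
  have "(\<Sum>v\<in>S. u v *\<^sub>R v) + (\<Sum>w\<in>T. u w *\<^sub>R w) = 0"
    using u(3) unfolding sum.union_disjoint[OF finite_S finite_T disjoint] .
  moreover have "(\<Sum>v\<in>S. c v *\<^sub>R v) = (\<Sum>v\<in>S. u v *\<^sub>R v)" unfolding c_def by simp
  moreover have "(\<Sum>w\<in>T. c w *\<^sub>R w) = - (\<Sum>w\<in>T. u w *\<^sub>R w)"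
    unfolding c_def sum_negf[symmetric] using disjoint by (intro sum.cong) auto
  ultimately have "balanced c" unfolding balanced_def by (metis add.inverse_unique minus_minus)
  obtain a where a: "balanced a" "\<forall>i\<in>S \<union> T. 0 < a i" "(\<Sum>v\<in>S. a v *\<^sub>R v) \<noteq> 0"
    by (rule obtain_pos_balanced)
  obtain k where k: "\<forall>i\<in>S \<union> T. c i = k * a i"
    using balanced_proportional[OF a(1) _ a(3) \<open>balanced c\<close>] a(2) by (meson less_imp_le)
  obtain s w where "s \<in> S" "w \<in> T"
    using a(1,3) unfolding balanced_def by fastforce
  have "w \<notin> S" using \<open>w \<in> T\<close> disjoint by blast
  have "0 < a s" "0 < a w" using a(2) \<open>s \<in> S\<close> \<open>w \<in> T\<close> by auto
  have "k * a s = u s" using k[rule_format, of s] \<open>s \<in> S\<close> unfolding c_def by simp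
  then have "0 \<le> k * a s" using u(1) \<open>s \<in> S\<close> by simp
  then have "0 \<le> k" using \<open>0 < a s\<close> by (simp add: zero_le_mult_iff)
  have "k * a w = - u w" using k[rule_format, of w] \<open>w \<in> T\<close> \<open>w \<notin> S\<close> unfolding c_def by simp
  then have "k * a w \<le> 0" using u(1) \<open>w \<in> T\<close> by simp
  then have "k \<le> 0" using \<open>0 < a w\<close> by (simp add: mult_le_0_iff)
  then have "k = 0" using \<open>0 \<le> k\<close> by simp
  then have "\<forall>i\<in>S \<union> T. u i = 0" using k unfolding c_def by (auto split: if_splits)
  then show False using u(2) by simp
qed

end

lemma obtain_minimal_overlap:
  fixes V1 V2 :: "'a::euclidean_space set"
  assumes "finite V1" "finite V2" "V1 \<inter> V2 = {}" "pos V1 \<inter> pos V2 \<noteq> {0}"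
  obtains S T where "S \<subseteq> V1" "T \<subseteq> V2" "minimal_overlap S T"
proof -
  define P where "P = (\<lambda>(S, T). S \<subseteq> V1 \<and> T \<subseteq> V2 \<and> pos S \<inter> pos T \<noteq> {0})"
  define total_card where "total_card = (\<lambda>(S::'a set, T::'a set). card S + card T)"
  obtain ST where "P ST" and least: "\<And>ST'. P ST' \<Longrightarrow> total_card ST \<le> total_card ST'"
    using ex_has_least_nat[of P "(V1, V2)" total_card] assms(4) unfolding P_def by auto
  obtain S T where ST_eq: "ST = (S, T)" by fastforce
  have ST: "S \<subseteq> V1" "T \<subseteq> V2" "pos S \<inter> pos T \<noteq> {0}" using \<open>P ST\<close> unfolding ST_eq P_def by auto
  have "finite S" "finite T" using ST assms(1,2) finite_subset by auto
  have "minimal_overlap S T"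
  proof
    fix v assume "v \<in> S"
    have "card (S - {v}) < card S" using \<open>finite S\<close> \<open>v \<in> S\<close> by (rule card_Diff1_less)
    then have "\<not> P (S - {v}, T)" using least[of "(S - {v}, T)"] unfolding ST_eq total_card_def by auto
    then show "pos (S - {v}) \<inter> pos T = {0}" using ST zero_in_pos unfolding P_def by auto
  next
    fix w assume "w \<in> T"
    have "card (T - {w}) < card T" using \<open>finite T\<close> \<open>w \<in> T\<close> by (rule card_Diff1_less)
    then have "\<not> P (S, T - {w})" using least[of "(S, T - {w})"] unfolding ST_eq total_card_def by auto
    then show "pos S \<inter> pos (T - {w}) = {0}" using ST zero_in_pos unfolding P_def by auto
  qed (use ST \<open>finite S\<close> \<open>finite T\<close> assms(3) in auto)
  then show ?thesis using that ST by blast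
qed

theorem lemma2p1:
  fixes V1 V2 :: "'a::euclidean_space set"
  assumes "finite V1" and "finite V2"
    and "0 \<notin> V1" and "0 \<notin> V2"
    and "V1 \<inter> V2 = {}"
    and "\<forall>u\<in>V1 \<union> V2. \<forall>v\<in>V1 \<union> V2. u \<noteq> v \<longrightarrow> \<not> (\<exists>c>0. u = c *\<^sub>R v)"
    and "pos V1 \<inter> pos V2 \<noteq> {0}"
  shows "\<exists>V1' V2' d. V1' \<subseteq> V1 \<and> V2' \<subseteq> V2 \<and> d \<noteq> 0 \<and>
           (pos V1' \<inter> pos V2') - {0} = open_ray d \<and>
           open_ray d \<subseteq> rel_interior (pos V1') \<and>
           open_ray d \<subseteq> rel_interior (pos V2') \<and>
           0 \<notin> convex hull (V1' \<union> V2')"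
proof -
  obtain S T where "S \<subseteq> V1" "T \<subseteq> V2" and ST: "minimal_overlap S T"
    using obtain_minimal_overlap assms(1,2,5,7) by blast
  interpret minimal_overlap S T by (fact ST)
  obtain d where d: "d \<in> pos S" "d \<in> pos T" "d \<noteq> 0" using overlap zero_in_pos by blast
  have ray: "(pos S \<inter> pos T) - {0} = open_ray d" using d by (rule pos_inter_eq_open_ray)
  have "open_ray d \<subseteq> rel_interior (pos S)" "open_ray d \<subseteq> rel_interior (pos T)"
    using common_point_in_rel_interior unfolding ray[symmetric] by auto
  then show ?thesis
    using \<open>S \<subseteq> V1\<close> \<open>T \<subseteq> V2\<close> d(3) ray zero_notin_convex_hull by blast
qed

end
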